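(* Let $G$ be a finitely generated torsion-free nilpotent group, and suppose $\overline{G}=R_1\times\cdots\times R_m=K_1\times\cdots\times K_m$ are two decompositions of $\overline{G}$ into nontrivial, rationally indecomposable rational subgroups, indexed so that for every $i$: the restriction to $K_i$ of the projection $\alpha_i:\overline{G}\to R_i$ is an isomorphism onto $R_i$ whose inverse is the restriction to $R_i$ of the projection $\beta_i:\overline{G}\to K_i$, and $\overline{G}=R_1\times\cdots\times R_{i-1}\times K_i\times R_{i+1}\times\cdots\times R_m$. Then $K_iZ(\overline{G})=R_iZ(\overline{G})$ for all $i$.
   Context: $\overline{G}$ is the rational closure (Malcev completion) of $G$: a torsion-free nilpotent group containing $G$ in which every element has a unique $n$-th root for each $n\ge1$ and some positive power of every element lies in $G$. A subgroup is rational if closed under taking $n$-th roots for all $n\ge1$; rationally indecomposable means not a direct product of two nontrivial rational subgroups. $Z(\cdot)$ denotes the center. *)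

theory Defs
  imports "HOL-Algebra.Algebra"
begin

definition grp_center :: "('a, 'b) monoid_scheme \<Rightarrow> 'a set" where
  "grp_center H = {z \<in> carrier H. \<forall>x \<in> carrier H. z \<otimes>\<^bsub>H\<^esub> x = x \<otimes>\<^bsub>H\<^esub> z}"

definition grp_commutator :: "('a, 'b) monoid_scheme \<Rightarrow> 'a \<Rightarrow> 'a \<Rightarrow> 'a" where
  "grp_commutator H x y = inv\<^bsub>H\<^esub> x \<otimes>\<^bsub>H\<^esub> inv\<^bsub>H\<^esub> y \<otimes>\<^bsub>H\<^esub> x \<otimes>\<^bsub>H\<^esub> y"

fun lower_central :: "('a, 'b) monoid_scheme \<Rightarrow> nat \<Rightarrow> 'a set" where
  "lower_central H 0 = carrier H"
| "lower_central H (Suc k) =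
     generate H {grp_commutator H x y | x y. x \<in> lower_central H k \<and> y \<in> carrier H}"

definition nilpotent_grp :: "('a, 'b) monoid_scheme \<Rightarrow> bool" where
  "nilpotent_grp H \<longleftrightarrow> group H \<and> (\<exists>c. lower_central H c = {\<one>\<^bsub>H\<^esub>})"

definition torsion_free_grp :: "('a, 'b) monoid_scheme \<Rightarrow> bool" where
  "torsion_free_grp H \<longleftrightarrow>
     (\<forall>x \<in> carrier H. \<forall>n::nat. n \<ge> 1 \<longrightarrow> x [^]\<^bsub>H\<^esub> n = \<one>\<^bsub>H\<^esub> \<longrightarrow> x = \<one>\<^bsub>H\<^esub>)"

definition fin_gen_subgroup :: "'a set \<Rightarrow> ('a, 'b) monoid_scheme \<Rightarrow> bool" where
  "fin_gen_subgroup G H \<longleftrightarrow> (\<exists>S. finite S \<and> S \<subseteq> G \<and> generate H S = G)"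

text \<open>H is the rational closure (Malcev completion) of its subgroup G.\<close>
definition rational_closure_of :: "('a, 'b) monoid_scheme \<Rightarrow> 'a set \<Rightarrow> bool" where
  "rational_closure_of H G \<longleftrightarrow>
     nilpotent_grp H \<and> torsion_free_grp H \<and> subgroup G H \<and>
     (\<forall>x \<in> carrier H. \<forall>n::nat. n \<ge> 1 \<longrightarrow> (\<exists>!y. y \<in> carrier H \<and> y [^]\<^bsub>H\<^esub> n = x)) \<and>
     (\<forall>x \<in> carrier H. \<exists>n::nat. n \<ge> 1 \<and> x [^]\<^bsub>H\<^esub> n \<in> G)"

definition rational_subgroup :: "'a set \<Rightarrow> ('a, 'b) monoid_scheme \<Rightarrow> bool" where
  "rational_subgroup A H \<longleftrightarrow> subgroup A H \<and>
     (\<forall>x \<in> carrier H. \<forall>n::nat. n \<ge> 1 \<longrightarrow> x [^]\<^bsub>H\<^esub> n \<in> A \<longrightarrow> x \<in> A)"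

fun prodl :: "('a, 'b) monoid_scheme \<Rightarrow> (nat \<Rightarrow> 'a) \<Rightarrow> nat \<Rightarrow> 'a" where
  "prodl H f 0 = \<one>\<^bsub>H\<^esub>"
| "prodl H f (Suc n) = prodl H f n \<otimes>\<^bsub>H\<^esub> f n"

definition int_dprod :: "('a, 'b) monoid_scheme \<Rightarrow> (nat \<Rightarrow> 'a set) \<Rightarrow> nat \<Rightarrow> bool" where
  "int_dprod H R m \<longleftrightarrow>
     (\<forall>i < m. subgroup (R i) H) \<and>
     (\<forall>i < m. \<forall>j < m. i \<noteq> j \<longrightarrow> (\<forall>x \<in> R i. \<forall>y \<in> R j. x \<otimes>\<^bsub>H\<^esub> y = y \<otimes>\<^bsub>H\<^esub> x)) \<and>
     bij_betw (\<lambda>f. prodl H f m) (Pi\<^sub>E {..<m} R) (carrier H)"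

definition dprod_proj :: "('a, 'b) monoid_scheme \<Rightarrow> (nat \<Rightarrow> 'a set) \<Rightarrow> nat \<Rightarrow> nat \<Rightarrow> 'a \<Rightarrow> 'a" where
  "dprod_proj H R m i x = (THE f. f \<in> Pi\<^sub>E {..<m} R \<and> prodl H f m = x) i"

definition rationally_indecomposable :: "'a set \<Rightarrow> ('a, 'b) monoid_scheme \<Rightarrow> bool" where
  "rationally_indecomposable A H \<longleftrightarrow>
     \<not> (\<exists>B C. rational_subgroup B H \<and> rational_subgroup C H \<and>
             B \<noteq> {\<one>\<^bsub>H\<^esub>} \<and> C \<noteq> {\<one>\<^bsub>H\<^esub>} \<and>
             int_dprod (H\<lparr>carrier := A\<rparr>) (\<lambda>k. if k = 0 then B else C) 2)"

end

theory Submission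
  imports Defs
begin

text \<open>If \<open>K\<^sub>i\<close> can replace \<open>R\<^sub>i\<close> in the decomposition, then every
  \<open>x \<in> K\<^sub>i\<close> commutes with all factors \<open>R\<^sub>j\<close>, \<open>j \<noteq> i\<close>. Writing
  \<open>x = a\<^sub>1 \<cdots> a\<^sub>m\<close> with \<open>a\<^sub>j \<in> R\<^sub>j\<close>, the element \<open>c = a\<^sub>i\<^sup>-\<^sup>1 x\<close> commutes with
  \<open>R\<^sub>i\<close> (it is the product of the other factors) and with every \<open>R\<^sub>j\<close>, \<open>j \<noteq> i\<close>
  (both \<open>x\<close> and \<open>a\<^sub>i\<close> do), hence is central. So \<open>K\<^sub>i \<subseteq> R\<^sub>i Z\<close>; exchanging
  back gives the reverse inclusion.\<close>

context group
begin

lemma prodl_closed: "(\<And>j. j < n \<Longrightarrow> f j \<in> carrier G) \<Longrightarrow> prodl G f n \<in> carrier G"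
  by (induction n) auto

lemma prodl_cong: "(\<And>j. j < n \<Longrightarrow> f j = g j) \<Longrightarrow> prodl G f n = prodl G g n"
  by (induction n) auto

lemma prodl_commute:
  assumes "a \<in> carrier G" and "\<And>j. j < n \<Longrightarrow> f j \<in> carrier G \<and> a \<otimes> f j = f j \<otimes> a"
  shows "a \<otimes> prodl G f n = prodl G f n \<otimes> a"
  using assms(2)
proof (induction n)
  case 0
  then show ?case using assms(1) by simp
next
  case (Suc n)
  have f: "prodl G f n \<in> carrier G" "f n \<in> carrier G" "a \<otimes> f n = f n \<otimes> a"
    using Suc.prems by (auto intro: prodl_closed)
  have "a \<otimes> prodl G f (Suc n) = (a \<otimes> prodl G f n) \<otimes> f n"
    using f assms(1) by (simp add: m_assoc)
  also have "\<dots> = prodl G f n \<otimes> (a \<otimes> f n)"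
    using Suc f assms(1) by (simp add: m_assoc)
  also have "\<dots> = prodl G f (Suc n) \<otimes> a"
    using f assms(1) by (simp add: m_assoc)
  finally show ?case .
qed

lemma prodl_extract_factor:
  assumes "i < n" and "\<And>j. j < n \<Longrightarrow> f j \<in> carrier G"
    and "\<And>j. j < n \<Longrightarrow> j \<noteq> i \<Longrightarrow> f i \<otimes> f j = f j \<otimes> f i"
  shows "prodl G f n = f i \<otimes> prodl G (f(i := \<one>)) n"
  using assms
proof (induction n)
  case 0
  then show ?case by simp
next
  case (Suc n)
  show ?case
  proof (cases "i = n")
    case True
    have "prodl G (f(n := \<one>)) n = prodl G f n"
      by (intro prodl_cong) auto
    then have drop: "prodl G (f(n := \<one>)) (Suc n) = prodl G f n"
      using Suc.prems by (simp del: fun_upd_apply add: fun_upd_same prodl_closed)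
    have "f n \<otimes> prodl G f n = prodl G f n \<otimes> f n"
      using Suc.prems True by (intro prodl_commute) auto
    then show ?thesis
      unfolding True drop by simp
  next
    case False
    then have IH: "prodl G f n = f i \<otimes> prodl G (f(i := \<one>)) n"
      by (intro Suc.IH) (use Suc.prems in auto)
    have closed: "f i \<in> carrier G" "prodl G (f(i := \<one>)) n \<in> carrier G" "f n \<in> carrier G"
      using Suc.prems by (auto intro: prodl_closed)
    have "prodl G f (Suc n) = (f i \<otimes> prodl G (f(i := \<one>)) n) \<otimes> f n"
      by (simp only: prodl.simps IH)
    also have "\<dots> = f i \<otimes> (prodl G (f(i := \<one>)) n \<otimes> (f(i := \<one>)) n)"
      using False by (simp only: m_assoc[OF closed] fun_upd_other)
    also have "\<dots> = f i \<otimes> prodl G (f(i := \<one>)) (Suc n)"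
      by (simp only: prodl.simps)
    finally show ?thesis .
  qed
qed

lemma commute_cancel_left:
  assumes "a \<in> carrier G" "b \<in> carrier G" "c \<in> carrier G"
    and "a \<otimes> b = b \<otimes> a" and "(a \<otimes> c) \<otimes> b = b \<otimes> (a \<otimes> c)"
  shows "c \<otimes> b = b \<otimes> c"
proof -
  have "a \<otimes> (c \<otimes> b) = (a \<otimes> c) \<otimes> b"
    using assms(1-3) by (simp only: m_assoc)
  also have "\<dots> = (b \<otimes> a) \<otimes> c"
    using assms(1-3) by (simp only: assms(5) m_assoc)
  also have "\<dots> = a \<otimes> (b \<otimes> c)"
    using assms(1-3) by (simp only: assms(4)[symmetric] m_assoc)
  finally show ?thesis
    using assms(1-3) by simp
qed

lemma grp_center_mult_closed:
  assumes "a \<in> grp_center G" "b \<in> grp_center G"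
  shows "a \<otimes> b \<in> grp_center G"
proof -
  have ab: "a \<in> carrier G" "b \<in> carrier G"
    using assms by (auto simp: grp_center_def)
  have "(a \<otimes> b) \<otimes> x = x \<otimes> (a \<otimes> b)" if x: "x \<in> carrier G" for x
  proof -
    have ax: "a \<otimes> x = x \<otimes> a" and bx: "b \<otimes> x = x \<otimes> b"
      using assms x by (auto simp: grp_center_def)
    have "(a \<otimes> b) \<otimes> x = a \<otimes> (x \<otimes> b)"
      using ab x by (simp only: m_assoc bx)
    also have "\<dots> = (x \<otimes> a) \<otimes> b"
      using ab x by (simp only: m_assoc[symmetric] ax)
    also have "\<dots> = x \<otimes> (a \<otimes> b)"
      using ab x by (simp only: m_assoc)
    finally show ?thesis .
  qed
  with ab show ?thesis
    unfolding grp_center_def by blast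
qed

lemma subgroup_grp_center: "subgroup (grp_center G) G"
proof (rule subgroupI)
  show "grp_center G \<subseteq> carrier G" "grp_center G \<noteq> {}"
    by (auto simp: grp_center_def)
next
  fix a assume "a \<in> grp_center G"
  then have ac: "a \<in> carrier G" and comm: "\<And>x. x \<in> carrier G \<Longrightarrow> a \<otimes> x = x \<otimes> a"
    by (auto simp: grp_center_def)
  have "inv a \<otimes> x = x \<otimes> inv a" if x: "x \<in> carrier G" for x
    by (rule commute_cancel_left[of a]) (simp_all add: ac x comm)
  with ac show "inv a \<in> grp_center G"
    unfolding grp_center_def by blast
next
  fix a b assume "a \<in> grp_center G" "b \<in> grp_center G"
  then show "a \<otimes> b \<in> grp_center G"
    by (rule grp_center_mult_closed)
qed

lemma int_dprod_subgroup: "int_dprod G S m \<Longrightarrow> j < m \<Longrightarrow> subgroup (S j) G"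
  unfolding int_dprod_def by blast

lemma int_dprod_commute:
  "\<lbrakk>int_dprod G S m; j < m; k < m; j \<noteq> k; x \<in> S j; y \<in> S k\<rbrakk> \<Longrightarrow> x \<otimes> y = y \<otimes> x"
  unfolding int_dprod_def by blast

lemma int_dprod_surj:
  assumes "int_dprod G S m" and "x \<in> carrier G"
  obtains f where "f \<in> Pi\<^sub>E {..<m} S" and "prodl G f m = x"
proof -
  have "(\<lambda>f. prodl G f m) ` Pi\<^sub>E {..<m} S = carrier G"
    using assms(1) unfolding int_dprod_def by (simp add: bij_betw_def)
  with assms(2) have "x \<in> (\<lambda>f. prodl G f m) ` Pi\<^sub>E {..<m} S"
    by simp
  then show ?thesis
    using that by (auto elim: imageE)
qed

lemma int_dprod_commute_all_factors_imp_center: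
  assumes D: "int_dprod G S m" and c: "c \<in> carrier G"
    and comm: "\<And>j y. j < m \<Longrightarrow> y \<in> S j \<Longrightarrow> c \<otimes> y = y \<otimes> c"
  shows "c \<in> grp_center G"
  unfolding grp_center_def
proof (intro CollectI conjI ballI c)
  fix x assume "x \<in> carrier G"
  with D obtain g where g: "g \<in> Pi\<^sub>E {..<m} S" "prodl G g m = x"
    by (rule int_dprod_surj)
  have "g j \<in> carrier G \<and> c \<otimes> g j = g j \<otimes> c" if "j < m" for j
  proof -
    have "g j \<in> S j"
      using g(1) that by blast
    then show ?thesis
      using subgroup.mem_carrier[OF int_dprod_subgroup[OF D that]] comm[OF that] by simp
  qed
  then have "c \<otimes> prodl G g m = prodl G g m \<otimes> c"
    by (rule prodl_commute[OF c])
  with g(2) show "c \<otimes> x = x \<otimes> c" by simp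
qed

lemma int_dprod_commute_other_factors_imp_mem:
  assumes D: "int_dprod G S m" and i: "i < m" and t: "t \<in> carrier G"
    and comm: "\<And>j y. j < m \<Longrightarrow> j \<noteq> i \<Longrightarrow> y \<in> S j \<Longrightarrow> t \<otimes> y = y \<otimes> t"
  shows "t \<in> S i <#> grp_center G"
proof -
  obtain f where f: "f \<in> Pi\<^sub>E {..<m} S" "prodl G f m = t"
    using int_dprod_surj[OF D t] .
  have fS: "f j \<in> S j" if "j < m" for j
    using f(1) that by auto
  have in_carrier: "y \<in> carrier G" if "j < m" "y \<in> S j" for j y
    using subgroup.mem_carrier[OF int_dprod_subgroup[OF D that(1)] that(2)] .
  have commute_i: "y \<otimes> f k = f k \<otimes> y" if "k < m" "k \<noteq> i" "y \<in> S i" for k y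
    using int_dprod_commute[OF D i that(1) _ that(3) fS[OF that(1)]] that(2) by simp
  define c where "c = prodl G (f(i := \<one>)) m"
  have c: "c \<in> carrier G"
    unfolding c_def by (rule prodl_closed) (simp add: in_carrier[OF _ fS])
  have t_eq: "t = f i \<otimes> c"
    unfolding c_def f(2)[symmetric]
    by (rule prodl_extract_factor[OF i]) (simp_all add: in_carrier[OF _ fS] commute_i fS i)
  have "c \<otimes> y = y \<otimes> c" if j: "j < m" "y \<in> S j" for j y
  proof (cases "j = i")
    case True
    have "y \<otimes> c = c \<otimes> y"
      unfolding c_def using j True
      by (intro prodl_commute) (simp_all add: in_carrier[OF _ fS] in_carrier[OF i] commute_i)
    then show ?thesis by simp
  next
    case False
    show ?thesis
    proof (rule commute_cancel_left[of "f i"])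
      show "f i \<otimes> y = y \<otimes> f i"
        using int_dprod_commute[OF D i j(1) _ fS[OF i] j(2)] False by simp
      show "(f i \<otimes> c) \<otimes> y = y \<otimes> (f i \<otimes> c)"
        using comm[OF j(1) False j(2)] t_eq by simp
    qed (simp_all add: in_carrier[OF i fS[OF i]] in_carrier[OF j] c)
  qed
  then have "c \<in> grp_center G"
    by (rule int_dprod_commute_all_factors_imp_center[OF D c])
  with fS[OF i] show ?thesis
    unfolding t_eq set_mult_def by blast
qed

lemma int_dprod_exchange_factor_center_subset:
  assumes S: "int_dprod G S m" and ST: "int_dprod G (S(i := T)) m" and i: "i < m"
  shows "T <#> grp_center G \<subseteq> S i <#> grp_center G"
proof -
  have "T \<subseteq> S i <#> grp_center G"
  proof
    fix t assume t: "t \<in> T"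
    have "t \<in> carrier G"
      using subgroup.mem_carrier[OF int_dprod_subgroup[OF ST i]] t by simp
    moreover have "t \<otimes> y = y \<otimes> t" if "j < m" "j \<noteq> i" "y \<in> S j" for j y
      using int_dprod_commute[OF ST i that(1), of t y] t that by simp
    ultimately show "t \<in> S i <#> grp_center G"
      by (rule int_dprod_commute_other_factors_imp_mem[OF S i])
  qed
  then have "T <#> grp_center G \<subseteq> (S i <#> grp_center G) <#> grp_center G"
    by (rule mono_set_mult) (rule order_refl)
  also have "\<dots> = S i <#> (grp_center G <#> grp_center G)"
    by (rule set_mult_assoc) (simp_all add: subgroup.subset int_dprod_subgroup[OF S i]
        subgroup.subset[OF subgroup_grp_center])
  also have "\<dots> = S i <#> grp_center G"
    by (simp only: subgroup_mult_id[OF subgroup_grp_center])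
  finally show ?thesis .
qed

end

theorem mainTheorem9:
  fixes H :: "('a, 'b) monoid_scheme" and G :: "'a set"
    and R K :: "nat \<Rightarrow> 'a set" and m :: nat
  assumes "group H"
    and "subgroup G H"
    and "fin_gen_subgroup G H"
    and "nilpotent_grp (H\<lparr>carrier := G\<rparr>)"
    and "torsion_free_grp (H\<lparr>carrier := G\<rparr>)"
    and "rational_closure_of H G"
    and "int_dprod H R m"
    and "int_dprod H K m"
    and "\<forall>i < m. rational_subgroup (R i) H \<and> R i \<noteq> {\<one>\<^bsub>H\<^esub>} \<and> rationally_indecomposable (R i) H"
    and "\<forall>i < m. rational_subgroup (K i) H \<and> K i \<noteq> {\<one>\<^bsub>H\<^esub>} \<and> rationally_indecomposable (K i) H"
    and "\<forall>i < m. dprod_proj H R m i \<in> iso (H\<lparr>carrier := K i\<rparr>) (H\<lparr>carrier := R i\<rparr>)"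
    and "\<forall>i < m. \<forall>y \<in> R i. dprod_proj H K m i y \<in> K i \<and>
                             dprod_proj H R m i (dprod_proj H K m i y) = y"
    and "\<forall>i < m. \<forall>x \<in> K i. dprod_proj H K m i (dprod_proj H R m i x) = x"
    and "\<forall>i < m. int_dprod H (R(i := K i)) m"
  shows "\<forall>i < m. K i <#>\<^bsub>H\<^esub> grp_center H = R i <#>\<^bsub>H\<^esub> grp_center H"
proof (intro allI impI)
  fix i assume i: "i < m"
  interpret group H by fact
  have R: "int_dprod H R m" and RK: "int_dprod H (R(i := K i)) m"
    using assms(7,14) i by blast+
  have RK_back: "int_dprod H ((R(i := K i))(i := R i)) m"
    using R by simp
  show "K i <#>\<^bsub>H\<^esub> grp_center H = R i <#>\<^bsub>H\<^esub> grp_center H"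
  proof
    show "K i <#>\<^bsub>H\<^esub> grp_center H \<subseteq> R i <#>\<^bsub>H\<^esub> grp_center H"
      by (rule int_dprod_exchange_factor_center_subset[OF R RK i])
    show "R i <#>\<^bsub>H\<^esub> grp_center H \<subseteq> K i <#>\<^bsub>H\<^esub> grp_center H"
      using int_dprod_exchange_factor_center_subset[OF RK RK_back i] by simp
  qed
qed

end
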